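(* Let $2\le m\le n$. If $u$ and $v$ are incomparable elements of the poset $(P_n\times P_2^m,\trianglelefteq)$, then $d_{H_{n,m}}(u,v)\le1+\binom{m}{2}$.
   Context: $P_k=\{0,\dots,k-1\}$, so $P_n\times P_2^m$ is the set of integer tuples $(v_0,\dots,v_m)$ with $0\le v_0\le n-1$ and $v_1,\dots,v_m\in\{0,1\}$. The dominance order $\trianglelefteq$ on $\mathbb{Z}^{m+1}$ is given by $(v_0,\dots,v_m)\trianglelefteq(u_0,\dots,u_m)$ iff $\sum_{j=0}^{i}v_j\le\sum_{j=0}^{i}u_j$ for every $0\le i\le m$; $P_n\times P_2^m$ carries the induced order. $H_{n,m}$ is the (undirected) Hasse diagram of $(P_n\times P_2^m,\trianglelefteq)$: $x,y$ are adjacent iff one covers the other. *)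

theory Defs
  imports "HOL-Library.Extended_Nat"
begin

text \<open>Elements of P_n x P_2^m are represented as lists (v_0,...,v_m) of naturals
  of length m+1, with v_0 < n and v_i < 2 for 1 <= i <= m.\<close>
definition grid :: "nat \<Rightarrow> nat \<Rightarrow> nat list set" where
  "grid n m = {v. length v = Suc m \<and> v ! 0 < n \<and> (\<forall>i\<in>{1..m}. v ! i < 2)}"

definition dom_le :: "nat list \<Rightarrow> nat list \<Rightarrow> bool" where
  "dom_le v u \<longleftrightarrow> length v = length u \<and>
     (\<forall>i < length v. sum_list (take (Suc i) v) \<le> sum_list (take (Suc i) u))"

definition dom_less :: "nat list \<Rightarrow> nat list \<Rightarrow> bool" where
  "dom_less v u \<longleftrightarrow> dom_le v u \<and> v \<noteq> u"

definition covers_in :: "nat list set \<Rightarrow> nat list \<Rightarrow> nat list \<Rightarrow> bool" where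
  "covers_in S y x \<longleftrightarrow> x \<in> S \<and> y \<in> S \<and> dom_less x y \<and>
     \<not> (\<exists>z\<in>S. dom_less x z \<and> dom_less z y)"

definition hasse_adj :: "nat \<Rightarrow> nat \<Rightarrow> nat list \<Rightarrow> nat list \<Rightarrow> bool" where
  "hasse_adj n m x y \<longleftrightarrow> covers_in (grid n m) x y \<or> covers_in (grid n m) y x"

text \<open>A walk from x to y in H_{n,m} given as its list of vertices;
  its length (number of edges) is length - 1.\<close>
definition hasse_walk :: "nat \<Rightarrow> nat \<Rightarrow> nat list list \<Rightarrow> nat list \<Rightarrow> nat list \<Rightarrow> bool" where
  "hasse_walk n m ws x y \<longleftrightarrow> ws \<noteq> [] \<and> hd ws = x \<and> last ws = y \<and> set ws \<subseteq> grid n m \<and>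
     (\<forall>i. Suc i < length ws \<longrightarrow> hasse_adj n m (ws ! i) (ws ! Suc i))"

text \<open>Graph distance (infinite if no walk exists).\<close>
definition hasse_dist :: "nat \<Rightarrow> nat \<Rightarrow> nat list \<Rightarrow> nat list \<Rightarrow> enat" where
  "hasse_dist n m x y = (INF ws \<in> {ws. hasse_walk n m ws x y}. enat (length ws - 1))"

end

theory Submission
  imports Defs
begin

(* Identify an element x with its vector of prefix sums S_x(i) = x_0 + ... + x_i, so that
   dominance becomes the componentwise order. If S_y(k) < S_x(k) somewhere, then moving one
   unit of x from a suitable position k to k + 1 gives an element covered by x whose
   prefix-sum vector is one step closer to that of y in the l1 norm; so the Hasse distance
   is at most the l1 distance of the prefix-sum vectors. For incomparable u and v the
   difference D = S_u - S_v changes sign and, as all entries but the first are 0 or 1,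
   changes by at most 1 per step. Hence D vanishes at some 0 < z < m and |D(k)| <= |k - z|,
   and summing gives at most C(z+1,2) + C(m-z+1,2) <= 1 + C(m,2). *)

definition prefix_sum :: "nat list \<Rightarrow> nat \<Rightarrow> nat" where
  "prefix_sum x i = sum_list (take (Suc i) x)"

lemma prefix_sum_0: "x \<noteq> [] \<Longrightarrow> prefix_sum x 0 = x ! 0"
  by (cases x) (auto simp: prefix_sum_def)

lemma prefix_sum_Suc: "Suc i < length x \<Longrightarrow> prefix_sum x (Suc i) = prefix_sum x i + x ! Suc i"
  by (simp add: prefix_sum_def take_Suc_conv_app_nth)

lemma prefix_sum_eqI:
  assumes "length x = length y" and "\<And>i. i < length x \<Longrightarrow> prefix_sum x i = prefix_sum y i"
  shows "x = y"
proof (rule nth_equalityI)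
  fix i assume i: "i < length x"
  show "x ! i = y ! i"
  proof (cases i)
    case 0
    then show ?thesis using i assms prefix_sum_0[of x] prefix_sum_0[of y] by force
  next
    case (Suc j)
    then show ?thesis using i assms prefix_sum_Suc[of j x] prefix_sum_Suc[of j y] by force
  qed
qed fact

lemma dom_le_iff_prefix_sum:
  "dom_le x y \<longleftrightarrow> length x = length y \<and> (\<forall>i<length x. prefix_sum x i \<le> prefix_sum y i)"
  by (simp add: dom_le_def prefix_sum_def)

lemma prefix_sum_less_imp_positive_entry:
  assumes "i < length x" and "length y = length x" and "prefix_sum y i < prefix_sum x i"
  shows "\<exists>k\<le>i. prefix_sum y k < prefix_sum x k \<and> 0 < x ! k"
  using assms
proof (induction i)
  case 0
  then show ?case using prefix_sum_0[of x] by auto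
next
  case (Suc i)
  show ?case
  proof (cases "prefix_sum y i < prefix_sum x i")
    case True
    then show ?thesis using Suc by (metis Suc_lessD le_Suc_eq)
  next
    case False
    then have "y ! Suc i < x ! Suc i"
      using Suc.prems prefix_sum_Suc[of i x] prefix_sum_Suc[of i y] by simp
    then show ?thesis using Suc.prems(3) by (intro exI[of _ "Suc i"]) auto
  qed
qed

text \<open>For the last index k the second update is out of range, hence a no-op: the last
  entry is simply decremented.\<close>
definition move_unit :: "nat list \<Rightarrow> nat \<Rightarrow> nat list" where
  "move_unit x k = x[k := x ! k - 1, Suc k := x ! Suc k + 1]"

lemma length_move_unit [simp]: "length (move_unit x k) = length x"
  by (simp add: move_unit_def)

lemma nth_move_unit:
  "j < length x \<Longrightarrow>
    move_unit x k ! j = (if j = k then x ! k - 1 else if j = Suc k then x ! j + 1 else x ! j)"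
  by (auto simp: move_unit_def nth_list_update)

lemma prefix_sum_move_unit:
  assumes "k < length x" and "0 < x ! k" and "i < length x"
  shows "int (prefix_sum (move_unit x k) i) = int (prefix_sum x i) - (if i = k then 1 else 0)"
  using assms(3)
proof (induction i)
  case 0
  have "move_unit x k \<noteq> []"
    using assms(1) by (metis length_move_unit length_greater_0_conv order.strict_trans1 le0)
  then show ?case
    using 0 assms prefix_sum_0[of x] prefix_sum_0[of "move_unit x k"] nth_move_unit[of 0 x k] by auto
next
  case (Suc i)
  then show ?case
    using assms prefix_sum_Suc[of i x] prefix_sum_Suc[of i "move_unit x k"] nth_move_unit[of "Suc i" x k]
    by auto
qed

lemma covers_in_if_prefix_sum_drop:
  assumes "x \<in> S" and "x' \<in> S" and "length x' = length x"
    and drop: "\<And>i. i < length x \<Longrightarrow>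
      int (prefix_sum x' i) = int (prefix_sum x i) - (if i = k then 1 else 0)"
    and "k < length x"
  shows "covers_in S x x'"
proof -
  have "prefix_sum x' i \<le> prefix_sum x i" if "i < length x" for i
    using drop[OF that] by (cases "i = k") auto
  then have "dom_le x' x"
    unfolding dom_le_iff_prefix_sum using assms(3) by simp
  moreover have "x' \<noteq> x" using drop[of k] \<open>k < length x\<close> by auto
  moreover have "z = x \<or> z = x'" if "dom_le x' z" and "dom_le z x" for z
  proof -
    have len: "length z = length x" using that by (simp add: dom_le_def)
    have between: "prefix_sum x' i \<le> prefix_sum z i \<and> prefix_sum z i \<le> prefix_sum x i"
      if "i < length x" for i
      using \<open>dom_le x' z\<close> \<open>dom_le z x\<close> that assms(3) len by (simp add: dom_le_iff_prefix_sum)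
    show ?thesis
    proof (cases "prefix_sum z k = prefix_sum x k")
      case True
      then have "z = x" using len between drop
        by (intro prefix_sum_eqI) (fastforce split: if_splits)+
      then show ?thesis ..
    next
      case False
      then have "z = x'" using len between drop assms(3)
        by (intro prefix_sum_eqI) (fastforce split: if_splits)+
      then show ?thesis ..
    qed
  qed
  ultimately show ?thesis
    using assms(1,2) by (auto simp: covers_in_def dom_less_def)
qed

lemma grid_lengthD: "x \<in> grid n m \<Longrightarrow> length x = Suc m"
  by (simp add: grid_def)

lemma grid_entryD: "x \<in> grid n m \<Longrightarrow> 0 < i \<Longrightarrow> i \<le> m \<Longrightarrow> x ! i \<le> 1"
  unfolding grid_def by (fastforce dest!: bspec[of _ _ i])

lemma move_unit_in_grid:
  assumes "x \<in> grid n m" and "k \<le> m" and "0 < x ! k" and "k < m \<Longrightarrow> x ! Suc k = 0"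
  shows "move_unit x k \<in> grid n m"
  using assms nth_move_unit[of _ x k] grid_entryD[OF assms(1)]
  unfolding grid_def by (force simp: less_Suc_eq_le)

definition prefix_sum_dist :: "nat \<Rightarrow> nat list \<Rightarrow> nat list \<Rightarrow> nat" where
  "prefix_sum_dist m x y = (\<Sum>i\<le>m. nat \<bar>int (prefix_sum x i) - int (prefix_sum y i)\<bar>)"

lemma prefix_sum_dist_commute: "prefix_sum_dist m x y = prefix_sum_dist m y x"
  by (simp add: prefix_sum_dist_def abs_minus_commute)

lemma prefix_sum_dist_eq_0_iff:
  assumes "length x = Suc m" and "length y = Suc m"
  shows "prefix_sum_dist m x y = 0 \<longleftrightarrow> x = y"
  using assms prefix_sum_eqI[of x y] by (auto simp: prefix_sum_dist_def less_Suc_eq_le)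

lemma prefix_sum_dist_move_unit:
  assumes "length x = Suc m" and "k \<le> m" and "0 < x ! k"
    and "prefix_sum y k < prefix_sum x k"
  shows "prefix_sum_dist m x y = Suc (prefix_sum_dist m (move_unit x k) y)"
proof -
  let ?d = "\<lambda>x i. nat \<bar>int (prefix_sum x i) - int (prefix_sum y i)\<bar>"
  have ps: "int (prefix_sum (move_unit x k) i) = int (prefix_sum x i) - (if i = k then 1 else 0)"
    if "i \<le> m" for i
    using prefix_sum_move_unit[of k x i] assms that by simp
  have "prefix_sum_dist m x y = ?d x k + sum (?d x) ({..m} - {k})"
    unfolding prefix_sum_dist_def using assms(2) by (simp add: sum.remove)
  moreover have "prefix_sum_dist m (move_unit x k) y
      = ?d (move_unit x k) k + sum (?d (move_unit x k)) ({..m} - {k})"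
    unfolding prefix_sum_dist_def using assms(2) by (simp add: sum.remove)
  moreover have "sum (?d x) ({..m} - {k}) = sum (?d (move_unit x k)) ({..m} - {k})"
    by (rule sum.cong) (auto simp: ps)
  moreover have "?d x k = Suc (?d (move_unit x k) k)"
    using ps[OF assms(2)] assms(4) by auto
  ultimately show ?thesis by simp
qed

lemma exists_movable_excess:
  assumes x: "x \<in> grid n m" and y: "y \<in> grid n m"
    and "i \<le> m" and "prefix_sum y i < prefix_sum x i"
  shows "\<exists>k\<le>m. prefix_sum y k < prefix_sum x k \<and> 0 < x ! k \<and> (k < m \<longrightarrow> x ! Suc k = 0)"
proof -
  define S where "S = {k. k \<le> m \<and> prefix_sum y k < prefix_sum x k \<and> 0 < x ! k}"
  have "finite S" by (simp add: S_def)
  moreover have "S \<noteq> {}"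
    using prefix_sum_less_imp_positive_entry[of i x y] assms grid_lengthD[OF x] grid_lengthD[OF y]
    by (fastforce simp: S_def)
  ultimately have k: "Max S \<in> S" and k_max: "\<And>k. k \<in> S \<Longrightarrow> k \<le> Max S"
    by auto
  have "x ! Suc (Max S) = 0" if "Max S < m"
  proof (rule ccontr)
    assume "x ! Suc (Max S) \<noteq> 0"
    then have "x ! Suc (Max S) = 1" using grid_entryD[OF x, of "Suc (Max S)"] that by simp
    moreover have "y ! Suc (Max S) \<le> 1" using grid_entryD[OF y, of "Suc (Max S)"] that by simp
    ultimately have "Suc (Max S) \<in> S"
      using k that prefix_sum_Suc[of "Max S" x] prefix_sum_Suc[of "Max S" y]
        grid_lengthD[OF x] grid_lengthD[OF y] by (simp add: S_def)
    then show False using k_max by fastforce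
  qed
  then show ?thesis using k unfolding S_def by blast
qed

lemma exists_lower_cover_closer:
  assumes x: "x \<in> grid n m" and y: "y \<in> grid n m"
    and "i \<le> m" and "prefix_sum y i < prefix_sum x i"
  shows "\<exists>x'. covers_in (grid n m) x x' \<and> prefix_sum_dist m x y = Suc (prefix_sum_dist m x' y)"
proof -
  obtain k where k: "k \<le> m" "prefix_sum y k < prefix_sum x k" "0 < x ! k" "k < m \<Longrightarrow> x ! Suc k = 0"
    using exists_movable_excess[OF assms] by blast
  have "covers_in (grid n m) x (move_unit x k)"
    using x move_unit_in_grid[OF x k(1,3,4)] prefix_sum_move_unit[of k x] k grid_lengthD[OF x]
    by (intro covers_in_if_prefix_sum_drop) auto
  moreover have "prefix_sum_dist m x y = Suc (prefix_sum_dist m (move_unit x k) y)"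
    using prefix_sum_dist_move_unit[OF grid_lengthD[OF x] k(1,3,2)] .
  ultimately show ?thesis by blast
qed

lemma hasse_walk_Cons:
  assumes "hasse_walk n m ws x' y" and "hasse_adj n m x x'" and "x \<in> grid n m"
  shows "hasse_walk n m (x # ws) x y"
  unfolding hasse_walk_def
proof (intro conjI allI impI)
  show "last (x # ws) = y" and "set (x # ws) \<subseteq> grid n m"
    using assms by (auto simp: hasse_walk_def)
  fix i assume "Suc i < length (x # ws)"
  then show "hasse_adj n m ((x # ws) ! i) ((x # ws) ! Suc i)"
    using assms(1,2) by (cases i; cases ws) (auto simp: hasse_walk_def)
qed simp_all

lemma hasse_walk_snoc:
  assumes "hasse_walk n m ws x y'" and "hasse_adj n m y' y" and "y \<in> grid n m"
  shows "hasse_walk n m (ws @ [y]) x y"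
  unfolding hasse_walk_def
proof (intro conjI allI impI)
  show "hd (ws @ [y]) = x" and "set (ws @ [y]) \<subseteq> grid n m"
    using assms by (auto simp: hasse_walk_def)
  fix i assume i: "Suc i < length (ws @ [y])"
  show "hasse_adj n m ((ws @ [y]) ! i) ((ws @ [y]) ! Suc i)"
  proof (cases "Suc i < length ws")
    case True
    then show ?thesis using assms(1) by (auto simp: hasse_walk_def nth_append)
  next
    case False
    then have "i = length ws - 1" using i by simp
    then show ?thesis
      using assms(1,2) by (auto simp: hasse_walk_def nth_append last_conv_nth)
  qed
qed simp_all

lemma hasse_walk_of_prefix_sum_dist:
  assumes "x \<in> grid n m" and "y \<in> grid n m"
  shows "\<exists>ws. hasse_walk n m ws x y \<and> length ws = Suc (prefix_sum_dist m x y)"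
  using assms
proof (induction "prefix_sum_dist m x y" arbitrary: x y)
  case 0
  then have "x = y" using prefix_sum_dist_eq_0_iff grid_lengthD by metis
  then show ?case using 0 by (intro exI[of _ "[x]"]) (auto simp: hasse_walk_def)
next
  case (Suc d)
  have len: "length x = Suc m" "length y = Suc m" using Suc.prems grid_lengthD by auto
  show ?case
  proof (cases "\<exists>i\<le>m. prefix_sum y i < prefix_sum x i")
    case True
    then obtain x' where x': "covers_in (grid n m) x x'"
      "prefix_sum_dist m x y = Suc (prefix_sum_dist m x' y)"
      using exists_lower_cover_closer[OF Suc.prems] by blast
    then obtain ws where "hasse_walk n m ws x' y" "length ws = Suc d"
      using Suc.hyps(1)[of x' y] Suc.hyps(2) Suc.prems(2) by (auto simp: covers_in_def)
    then show ?thesis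
      using hasse_walk_Cons[of n m ws x' y x] x' Suc.prems(1) Suc.hyps(2)
      by (auto simp: hasse_adj_def)
  next
    case False
    have "x \<noteq> y" using Suc.hyps(2) prefix_sum_dist_eq_0_iff[OF len] by auto
    then obtain i where "i \<le> m" "prefix_sum x i < prefix_sum y i"
      using False prefix_sum_eqI[of x y] len by (metis less_Suc_eq_le nat_neq_iff)
    then obtain y' where y': "covers_in (grid n m) y y'"
      "prefix_sum_dist m y x = Suc (prefix_sum_dist m y' x)"
      using exists_lower_cover_closer[OF Suc.prems(2,1)] by blast
    then obtain ws where "hasse_walk n m ws x y'" "length ws = Suc d"
      using Suc.hyps(1)[of x y'] Suc.hyps(2) Suc.prems(1) prefix_sum_dist_commute[of m]
      by (auto simp: covers_in_def)
    then show ?thesis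
      using hasse_walk_snoc[of n m ws x y' y] y' Suc.prems(2) Suc.hyps(2) prefix_sum_dist_commute[of m]
      by (auto simp: hasse_adj_def)
  qed
qed

lemma hasse_dist_le_prefix_sum_dist:
  assumes "x \<in> grid n m" and "y \<in> grid n m"
  shows "hasse_dist n m x y \<le> enat (prefix_sum_dist m x y)"
proof -
  obtain ws where ws: "hasse_walk n m ws x y" "length ws = Suc (prefix_sum_dist m x y)"
    using hasse_walk_of_prefix_sum_dist[OF assms] by blast
  have "hasse_dist n m x y \<le> enat (length ws - 1)"
    unfolding hasse_dist_def by (rule INF_lower) (simp add: ws(1))
  then show ?thesis by (simp add: ws(2))
qed

lemma abs_diff_le_of_unit_steps:
  fixes f :: "nat \<Rightarrow> int"
  assumes steps: "\<And>k. j \<le> k \<Longrightarrow> k < i \<Longrightarrow> \<bar>f (Suc k) - f k\<bar> \<le> 1" and "j \<le> i"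
  shows "\<bar>f i - f j\<bar> \<le> int (i - j)"
  using assms(2) steps
proof (induction i rule: dec_induct)
  case (step i)
  have "\<bar>f (Suc i) - f j\<bar> \<le> \<bar>f (Suc i) - f i\<bar> + \<bar>f i - f j\<bar>" by linarith
  also have "\<dots> \<le> 1 + int (i - j)" using step by (intro add_mono) auto
  finally show ?case using step.hyps(1) by (simp add: Suc_diff_le)
qed simp

lemma prefix_sum_diff_step:
  assumes "x \<in> grid n m" and "y \<in> grid n m" and "k < m"
  shows "\<bar>(int (prefix_sum x (Suc k)) - int (prefix_sum y (Suc k)))
           - (int (prefix_sum x k) - int (prefix_sum y k))\<bar> \<le> 1"
  using assms prefix_sum_Suc[of k x] prefix_sum_Suc[of k y] grid_lengthD[of _ n m]
    grid_entryD[of x n m "Suc k"] grid_entryD[of y n m "Suc k"]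
  by simp

lemma prefix_sums_cross:
  assumes "x \<in> grid n m" and "y \<in> grid n m" and "j < i" and "i \<le> m"
    and "prefix_sum x j < prefix_sum y j" and "prefix_sum y i < prefix_sum x i"
  shows "\<exists>z. j < z \<and> z < i \<and> prefix_sum x z = prefix_sum y z"
proof -
  define D where "D k = int (prefix_sum x k) - int (prefix_sum y k)" for k
  have "\<forall>k. j \<le> k \<and> k < i \<longrightarrow> \<bar>D (Suc k) - D k\<bar> \<le> 1"
    using prefix_sum_diff_step[OF assms(1,2)] assms(4) by (simp add: D_def)
  moreover have "D j \<le> 0" and "0 \<le> D i" using assms(5,6) by (simp_all add: D_def)
  ultimately obtain z where "j \<le> z" "z \<le> i" "D z = 0"
    using nat_intermed_int_val[of j i D 0] assms(3) by auto
  moreover have "z \<noteq> j" and "z \<noteq> i" using \<open>D z = 0\<close> assms(5,6) by (auto simp: D_def)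
  ultimately have "j < z" "z < i" "prefix_sum x z = prefix_sum y z" by (auto simp: D_def)
  then show ?thesis by blast
qed

lemma incomparable_prefix_sums_meet:
  assumes u: "u \<in> grid n m" and v: "v \<in> grid n m"
    and "\<not> dom_le u v" and "\<not> dom_le v u"
  shows "\<exists>z. 0 < z \<and> z < m \<and> prefix_sum u z = prefix_sum v z"
proof -
  have len: "length u = Suc m" "length v = Suc m" using u v grid_lengthD by auto
  obtain i where i: "i \<le> m" "prefix_sum v i < prefix_sum u i"
    using assms(3) len by (auto simp: dom_le_iff_prefix_sum not_le less_Suc_eq_le)
  obtain j where j: "j \<le> m" "prefix_sum u j < prefix_sum v j"
    using assms(4) len by (auto simp: dom_le_iff_prefix_sum not_le less_Suc_eq_le)
  have "i < j \<or> j < i" using i j by (metis less_asym linorder_neqE_nat)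
  then obtain z where "min i j < z" "z < max i j" "prefix_sum u z = prefix_sum v z"
    using prefix_sums_cross[OF v u _ j(1) i(2) j(2)] prefix_sums_cross[OF u v _ i(1) j(2) i(2)]
    by (metis max.strict_order_iff min.strict_order_iff min.commute max.commute)
  then show ?thesis using i(1) j(1) by (intro exI[of _ z]) auto
qed

lemma sum_dist_to_point:
  assumes "z \<le> m"
  shows "2 * (\<Sum>i\<le>m. nat \<bar>int i - int z\<bar>) = z * (z + 1) + (m - z) * (m - z + 1)"
  using assms
proof (induction m rule: dec_induct)
  case base
  have "(\<Sum>i\<le>z. nat \<bar>int i - int z\<bar>) = (\<Sum>i=0..z. z - i)"
    by (intro sum.cong) auto
  also have "\<dots> = (\<Sum>i=0..z. i)"
    using sum.atLeastAtMost_rev[of "\<lambda>i. z - i" 0 z] by simp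
  finally show ?case using double_gauss_sum[of z, where ?'a = nat] by simp
next
  case (step m)
  then show ?case by (simp add: sum.atMost_Suc Suc_diff_le algebra_simps)
qed

lemma sum_dist_to_inner_point_le:
  assumes "0 < z" and "z < m"
  shows "(\<Sum>i\<le>m. nat \<bar>int i - int z\<bar>) \<le> 1 + (m choose 2)"
proof -
  obtain a b where "z = Suc a" and "m - z = Suc b" and "m = z + (m - z)"
    using assms by (metis Suc_pred add_diff_inverse_nat not_less_iff_gr_or_eq zero_less_diff)
  then have "z * (z + 1) + (m - z) * (m - z + 1) \<le> 2 + m * (m - 1)"
    by (simp add: algebra_simps)
  moreover have "2 * (m choose 2) = m * (m - 1)"
    by (cases m) (simp_all add: choose_two)
  ultimately show ?thesis using sum_dist_to_point[of z m] assms by linarith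
qed

lemma prefix_sum_dist_incomparable_le:
  assumes u: "u \<in> grid n m" and v: "v \<in> grid n m"
    and "\<not> dom_le u v" and "\<not> dom_le v u"
  shows "prefix_sum_dist m u v \<le> 1 + (m choose 2)"
proof -
  obtain z where z: "0 < z" "z < m" "prefix_sum u z = prefix_sum v z"
    using incomparable_prefix_sums_meet[OF assms] by blast
  define D where "D k = int (prefix_sum u k) - int (prefix_sum v k)" for k
  have steps: "\<bar>D (Suc k) - D k\<bar> \<le> 1" if "k < m" for k
    using prefix_sum_diff_step[OF u v that] by (simp add: D_def)
  have "\<bar>D k\<bar> \<le> \<bar>int k - int z\<bar>" if "k \<le> m" for k
  proof (cases "z \<le> k")
    case True
    then show ?thesis
      using abs_diff_le_of_unit_steps[of z k D] steps that z(3) by (simp add: D_def)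
  next
    case False
    then show ?thesis
      using abs_diff_le_of_unit_steps[of k z D] steps z by (simp add: D_def)
  qed
  then have "prefix_sum_dist m u v \<le> (\<Sum>k\<le>m. nat \<bar>int k - int z\<bar>)"
    unfolding prefix_sum_dist_def D_def by (intro sum_mono) (simp add: nat_mono)
  also have "\<dots> \<le> 1 + (m choose 2)"
    using sum_dist_to_inner_point_le[OF z(1,2)] .
  finally show ?thesis .
qed

theorem lemma5p6:
  fixes n m :: nat and u v :: "nat list"
  assumes "2 \<le> m" and "m \<le> n"
    and "u \<in> grid n m" and "v \<in> grid n m"
    and "\<not> dom_le u v" and "\<not> dom_le v u"
  shows "hasse_dist n m u v \<le> enat (1 + (m choose 2))"
proof -
  have "hasse_dist n m u v \<le> enat (prefix_sum_dist m u v)"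
    using hasse_dist_le_prefix_sum_dist[OF assms(3,4)] .
  also have "\<dots> \<le> enat (1 + (m choose 2))"
    using prefix_sum_dist_incomparable_le[OF assms(3-6)] by simp
  finally show ?thesis .
qed

end
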